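(* Let $\boldsymbol{k}$ be a field of characteristic zero, $P=\boldsymbol{k}[x^1,\dots,x^n]$ with a symplectic Poisson bracket $\{\ ,\ \}$, $I\subseteq P$ a Poisson ideal, $A=P/I$, and $(\Omega_{A|\boldsymbol{k}})^\sharp\subseteq\operatorname{Der}(A)$ the $A$-submodule generated by the classes $\{a,\ \}+I\operatorname{Der}(P)$, $a\in P$. (1) There is a well-defined $A$-bilinear map $\omega^{\mathrm{Ham}}:(\Omega_{A|\boldsymbol{k}})^\sharp\times\operatorname{Der}(A)\to A$ determined by $\omega^{\mathrm{Ham}}(\{a,\ \}+I\operatorname{Der}(P),\,X+I\operatorname{Der}(P))=X(a)+I$ for $a\in P$, $X\in\operatorname{Der}_I(P)$, i.e. the value does not depend on the chosen representatives $a$ and $X$. (2) Let $\delta^{\mathrm{Ham}}$ be the naive de Rham differential of the Lie-Rinehart algebra $((\Omega_{A|\boldsymbol{k}})^\sharp,A)$. Then the restriction of $\omega^{\mathrm{Ham}}$ to $(\Omega_{A|\boldsymbol{k}})^\sharp\times(\Omega_{A|\boldsymbol{k}})^\sharp$, viewed as an element of $\operatorname{Alt}^2_A((\Omega_{A|\boldsymbol{k}})^\sharp,A)$, satisfies $\delta^{\mathrm{Ham}}\omega^{\mathrm{Ham}}=0$.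
   Context: The Poisson bracket is symplectic: its Poisson tensor $\Pi^{ij}=\{x^i,x^j\}\in P$ is non-degenerate (invertible). A Poisson ideal is an ideal with $\{I,P\}\subseteq I$. $\operatorname{Der}_I(P)=\{X\in\operatorname{Der}(P):X(I)\subseteq I\}$ and $\operatorname{Der}(A)\cong\operatorname{Der}_I(P)/I\operatorname{Der}(P)$. For a Lie-Rinehart algebra $(L,A)$ (a $\boldsymbol{k}$-Lie algebra and $A$-module $L$ acting on $A$ by derivations with $[X,aY]=X(a)Y+a[X,Y]$, $(aX)(b)=aX(b)$), the naive de Rham complex has cochains $\operatorname{Alt}^m_A(L,A)$ (alternating $A$-multilinear maps $L^m\to A$) and differential given by the Koszul formula $(\mathrm d\omega)(X_0,\dots,X_m)=\sum_i(-1)^iX_i(\omega(X_0,\dots,\widehat{X_i},\dots,X_m))+\sum_{i<j}(-1)^{i+j}\omega([X_i,X_j],X_0,\dots,\widehat{X_i},\dots,\widehat{X_j},\dots,X_m)$. $(\Omega_{A|\boldsymbol{k}})^\sharp$ is a Lie-Rinehart subalgebra of $(\operatorname{Der}(A),A)$ with the commutator bracket. *)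

theory Defs
  imports Main "HOL-Library.Poly_Mapping"
begin

text \<open>The polynomial ring P = k[x_i : i in 'n] (the finite type 'n indexes the n variables).\<close>
type_synonym ('n, 'k) mpoly = "('n \<Rightarrow>\<^sub>0 nat) \<Rightarrow>\<^sub>0 'k"

definition Var :: "'n \<Rightarrow> ('n, 'k::comm_ring_1) mpoly" where
  "Var i = Poly_Mapping.single (Poly_Mapping.single i 1) 1"

definition Const :: "'k \<Rightarrow> ('n, 'k::comm_ring_1) mpoly" where
  "Const c = Poly_Mapping.single 0 c"

definition Der :: "(('n, 'k::comm_ring_1) mpoly \<Rightarrow> ('n, 'k) mpoly) set" where
  "Der = {D. (\<forall>p q. D (p + q) = D p + D q) \<and> (\<forall>c p. D (Const c * p) = Const c * D p)
              \<and> (\<forall>p q. D (p * q) = p * D q + q * D p)}"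

text \<open>Poisson bracket on P: k-bilinear (via derivation property in the second slot and
  antisymmetry), antisymmetric, Leibniz, Jacobi.\<close>
definition poisson_bracket :: "(('n, 'k::comm_ring_1) mpoly \<Rightarrow> ('n, 'k) mpoly \<Rightarrow> ('n, 'k) mpoly) \<Rightarrow> bool" where
  "poisson_bracket pb \<longleftrightarrow> (\<forall>a. pb a \<in> Der) \<and> (\<forall>a b. pb a b = - pb b a)
     \<and> (\<forall>a b c. pb a (pb b c) + pb b (pb c a) + pb c (pb a b) = 0)"

text \<open>Symplectic: the Poisson tensor (pb x_i x_j) is invertible as a matrix over P.\<close>
definition symplectic :: "(('n::finite, 'k::comm_ring_1) mpoly \<Rightarrow> ('n, 'k) mpoly \<Rightarrow> ('n, 'k) mpoly) \<Rightarrow> bool" where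
  "symplectic pb \<longleftrightarrow> (\<exists>Q :: 'n \<Rightarrow> 'n \<Rightarrow> ('n, 'k) mpoly.
      (\<forall>i j. (\<Sum>l\<in>UNIV. pb (Var i) (Var l) * Q l j) = (if i = j then 1 else 0)) \<and>
      (\<forall>i j. (\<Sum>l\<in>UNIV. Q i l * pb (Var l) (Var j)) = (if i = j then 1 else 0)))"

definition is_ideal :: "'a::comm_ring_1 set \<Rightarrow> bool" where
  "is_ideal I \<longleftrightarrow> 0 \<in> I \<and> (\<forall>x\<in>I. \<forall>y\<in>I. x + y \<in> I) \<and> (\<forall>p. \<forall>x\<in>I. p * x \<in> I)"

definition poisson_ideal :: "(('n, 'k::comm_ring_1) mpoly \<Rightarrow> ('n, 'k) mpoly \<Rightarrow> ('n, 'k) mpoly) \<Rightarrow> ('n, 'k) mpoly set \<Rightarrow> bool" where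
  "poisson_ideal pb I \<longleftrightarrow> is_ideal I \<and> (\<forall>x\<in>I. \<forall>p. pb x p \<in> I)"

definition scal :: "'a::comm_ring_1 \<Rightarrow> ('a \<Rightarrow> 'a) \<Rightarrow> ('a \<Rightarrow> 'a)" where
  "scal c D = (\<lambda>p. c * D p)"

definition addD :: "('a::comm_ring_1 \<Rightarrow> 'a) \<Rightarrow> ('a \<Rightarrow> 'a) \<Rightarrow> ('a \<Rightarrow> 'a)" where
  "addD D E = (\<lambda>p. D p + E p)"

definition subD :: "('a::comm_ring_1 \<Rightarrow> 'a) \<Rightarrow> ('a \<Rightarrow> 'a) \<Rightarrow> ('a \<Rightarrow> 'a)" where
  "subD D E = (\<lambda>p. D p - E p)"

definition commD :: "('a \<Rightarrow> 'a::comm_ring_1) \<Rightarrow> ('a \<Rightarrow> 'a) \<Rightarrow> ('a \<Rightarrow> 'a)" where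
  "commD D E = (\<lambda>p. D (E p) - E (D p))"

inductive_set IDer :: "('n, 'k::comm_ring_1) mpoly set \<Rightarrow> (('n, 'k) mpoly \<Rightarrow> ('n, 'k) mpoly) set"
  for I where
    zero: "(\<lambda>_. 0) \<in> IDer I"
  | step: "D \<in> IDer I \<Longrightarrow> i \<in> I \<Longrightarrow> E \<in> Der \<Longrightarrow> addD D (scal i E) \<in> IDer I"

definition DerI :: "('n, 'k::comm_ring_1) mpoly set \<Rightarrow> (('n, 'k) mpoly \<Rightarrow> ('n, 'k) mpoly) set" where
  "DerI I = {X \<in> Der. \<forall>p\<in>I. X p \<in> I}"

text \<open>Congruence modulo I Der(P) (equality of classes in Der(A)).\<close>
definition congD :: "('n, 'k::comm_ring_1) mpoly set \<Rightarrow> (('n, 'k) mpoly \<Rightarrow> ('n, 'k) mpoly) \<Rightarrow> (('n, 'k) mpoly \<Rightarrow> ('n, 'k) mpoly) \<Rightarrow> bool" where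
  "congD I D E \<longleftrightarrow> subD D E \<in> IDer I"

inductive_set HamComb :: "(('n, 'k::comm_ring_1) mpoly \<Rightarrow> ('n, 'k) mpoly \<Rightarrow> ('n, 'k) mpoly) \<Rightarrow> (('n, 'k) mpoly \<Rightarrow> ('n, 'k) mpoly) set"
  for pb where
    zero: "(\<lambda>_. 0) \<in> HamComb pb"
  | step: "D \<in> HamComb pb \<Longrightarrow> addD D (scal c (pb a)) \<in> HamComb pb"

text \<open>Representatives in Der_I(P) of elements of (Omega_{A|k})^sharp, a submodule of Der(A).\<close>
definition Sharp :: "(('n, 'k::comm_ring_1) mpoly \<Rightarrow> ('n, 'k) mpoly \<Rightarrow> ('n, 'k) mpoly) \<Rightarrow> ('n, 'k) mpoly set \<Rightarrow> (('n, 'k) mpoly \<Rightarrow> ('n, 'k) mpoly) set" where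
  "Sharp pb I = {D \<in> DerI I. \<exists>H\<in>HamComb pb. congD I D H}"

text \<open>Congruence modulo I (equality in A = P/I).\<close>
definition cong :: "'a::comm_ring_1 set \<Rightarrow> 'a \<Rightarrow> 'a \<Rightarrow> bool" where
  "cong I p q \<longleftrightarrow> p - q \<in> I"

text \<open>w (on representatives) induces a well-defined A-bilinear map
  Sharp/IDer x Der_I/IDer \<rightarrow> P/I with w({a,_}, X) = X(a) mod I.\<close>
definition omegaHam :: "(('n, 'k::comm_ring_1) mpoly \<Rightarrow> ('n, 'k) mpoly \<Rightarrow> ('n, 'k) mpoly) \<Rightarrow> ('n, 'k) mpoly set
    \<Rightarrow> ((('n, 'k) mpoly \<Rightarrow> ('n, 'k) mpoly) \<Rightarrow> (('n, 'k) mpoly \<Rightarrow> ('n, 'k) mpoly) \<Rightarrow> ('n, 'k) mpoly) \<Rightarrow> bool" where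
  "omegaHam pb I w \<longleftrightarrow>
     \<comment> \<open>well-defined on classes\<close>
     (\<forall>D\<in>Sharp pb I. \<forall>D'\<in>Sharp pb I. \<forall>X\<in>DerI I. \<forall>X'\<in>DerI I.
        congD I D D' \<longrightarrow> congD I X X' \<longrightarrow> cong I (w D X) (w D' X')) \<and>
     \<comment> \<open>A-linear in the first argument\<close>
     (\<forall>D\<in>Sharp pb I. \<forall>E\<in>Sharp pb I. \<forall>X\<in>DerI I. \<forall>c.
        cong I (w (addD D (scal c E)) X) (w D X + c * w E X)) \<and>
     \<comment> \<open>A-linear in the second argument\<close>
     (\<forall>D\<in>Sharp pb I. \<forall>X\<in>DerI I. \<forall>Y\<in>DerI I. \<forall>c.
        cong I (w D (addD X (scal c Y))) (w D X + c * w D Y)) \<and>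
     \<comment> \<open>defining formula\<close>
     (\<forall>a. \<forall>X\<in>DerI I. cong I (w (pb a) X) (X a))"

definition dR2 :: "((('a::comm_ring_1) \<Rightarrow> 'a) \<Rightarrow> ('a \<Rightarrow> 'a) \<Rightarrow> 'a) \<Rightarrow> ('a \<Rightarrow> 'a) \<Rightarrow> ('a \<Rightarrow> 'a) \<Rightarrow> ('a \<Rightarrow> 'a) \<Rightarrow> 'a" where
  "dR2 w X0 X1 X2 =
      X0 (w X1 X2) - X1 (w X0 X2) + X2 (w X0 X1)
    - w (commD X0 X1) X2 + w (commD X0 X2) X1 - w (commD X1 X2) X0"

end

theory Submission
  imports Defs
begin

text \<open>
  Let \<open>Q\<close> be the inverse of the Poisson tensor. Then every derivation \<open>D\<close> of \<open>P\<close> is the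
  \<open>P\<close>-linear combination \<open>D = \<Sum>\<^sub>j c\<^sub>j {x\<^sub>j, _}\<close> of Hamiltonian derivations with
  \<open>c\<^sub>j = \<Sum>\<^sub>l D(x\<^sub>l) Q\<^sub>l\<^sub>j\<close>, so \<open>\<omega>(D, X) = \<Sum>\<^sub>j c\<^sub>j X(x\<^sub>j)\<close> is a \<open>P\<close>-bilinear form on \<open>Der(P)\<close>
  with \<open>\<omega>({a, _}, X) = X(a)\<close>. Being \<open>P\<close>-bilinear, it descends to \<open>A\<close>, and every \<open>\<omega>\<^sup>H\<^sup>a\<^sup>m\<close>
  agrees with it modulo \<open>I\<close>. On \<open>P\<close> itself \<open>\<omega>\<close> is antisymmetric, because
  \<open>\<omega>(D, {b, _}) = -D(b)\<close>, and \<open>\<delta>\<omega>\<close> is \<open>P\<close>-linear and antisymmetric in its first two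
  arguments; so \<open>\<delta>\<omega> = 0\<close> reduces to \<open>\<delta>\<omega>({b, _}, {a, _}, X) = 0\<close>, which is the Jacobi identity.
  Antisymmetry yields \<open>\<omega>(D, D) = 0\<close> only because 2 is invertible in the field of coefficients.
\<close>

lemma poly_mapping_induct_single [case_names zero single add]:
  fixes P :: "('a \<Rightarrow>\<^sub>0 'b::monoid_add) \<Rightarrow> bool"
  assumes "P 0" and "\<And>k v. P (Poly_Mapping.single k v)"
    and "\<And>f g. P f \<Longrightarrow> P g \<Longrightarrow> P (f + g)"
  shows "P f"
proof (induction f rule: update_induct)
  case const
  show ?case by (fact assms(1))
next
  case (update f a b)
  have "Poly_Mapping.update a b f = f + Poly_Mapping.single a b"
    using update(1)
    by (intro poly_mapping_eqI) (auto simp: lookup_update lookup_add lookup_single in_keys_iff when_def)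
  then show ?case using assms(2,3) update by simp
qed

lemma mpoly_induct [case_names Const Var add mult]:
  fixes P :: "('n, 'k::comm_ring_1) mpoly \<Rightarrow> bool"
  assumes Const: "\<And>c. P (Const c)" and Var: "\<And>i. P (Var i)"
    and add: "\<And>p q. P p \<Longrightarrow> P q \<Longrightarrow> P (p + q)" and mult: "\<And>p q. P p \<Longrightarrow> P q \<Longrightarrow> P (p * q)"
  shows "P p"
proof -
  have one: "P 1" using Const[of 1] by (simp add: Const_def)
  have monomial: "P (Poly_Mapping.single \<alpha> 1)" for \<alpha> :: "'n \<Rightarrow>\<^sub>0 nat"
  proof (induction \<alpha> rule: poly_mapping_induct_single)
    case zero
    show ?case using one by simp
  next
    case (single i n)
    show ?case
    proof (induction n)
      case 0
      show ?case using one by simp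
    next
      case (Suc n)
      have "Poly_Mapping.single (Poly_Mapping.single i (Suc n)) (1::'k) =
          Poly_Mapping.single (Poly_Mapping.single i n) 1 * Var i"
        by (simp add: Var_def mult_single flip: single_add)
      then show ?case using mult[OF Suc Var] by simp
    qed
  next
    case (add \<alpha> \<beta>)
    have "Poly_Mapping.single (\<alpha> + \<beta>) (1::'k) = Poly_Mapping.single \<alpha> 1 * Poly_Mapping.single \<beta> 1"
      by (simp add: mult_single)
    then show ?case using mult[OF add] by simp
  qed
  show ?thesis
  proof (induction p rule: poly_mapping_induct_single)
    case zero
    show ?case using Const[of 0] by (simp add: Const_def)
  next
    case (single \<alpha> c)
    have "Poly_Mapping.single \<alpha> c = Const c * Poly_Mapping.single \<alpha> 1"
      by (simp add: Const_def mult_single)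
    then show ?case using mult[OF Const monomial] by simp
  next
    case (add p q)
    then show ?case by (rule assms(3))
  qed
qed

lemma Der_add: "D \<in> Der \<Longrightarrow> D (p + q) = D p + D q"
  by (simp add: Der_def)

lemma Der_mult: "D \<in> Der \<Longrightarrow> D (p * q) = p * D q + q * D p"
  by (simp add: Der_def)

lemma Der_Const_mult: "D \<in> Der \<Longrightarrow> D (Const c * p) = Const c * D p"
  unfolding Der_def by blast

lemma Der_zero: "D \<in> Der \<Longrightarrow> D 0 = 0"
  using Der_add[of D 0 0] by simp

lemma Der_minus: "D \<in> Der \<Longrightarrow> D (- p) = - D p"
  using Der_add[of D p "- p"] by (simp add: Der_zero eq_neg_iff_add_eq_0 add.commute)

lemma Der_diff: "D \<in> Der \<Longrightarrow> D (p - q) = D p - D q"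
  using Der_add[of D p "- q"] by (simp add: Der_minus)

lemma Der_Const: "D \<in> Der \<Longrightarrow> D (Const c) = 0"
  using Der_Const_mult[of D c 1] Der_mult[of D 1 1] by simp

lemma Der_uminus:
  assumes "D \<in> Der"
  shows "(\<lambda>p. - D p) \<in> Der"
  unfolding Der_def using assms by (simp add: Der_add Der_mult Der_Const)

lemma lincomb_in_Der:
  assumes "\<And>j. j \<in> S \<Longrightarrow> D j \<in> Der"
  shows "(\<lambda>p. \<Sum>j\<in>S. c j * D j p) \<in> Der"
  unfolding Der_def
proof (intro CollectI conjI allI)
  fix p q
  show "(\<Sum>j\<in>S. c j * D j (p + q)) = (\<Sum>j\<in>S. c j * D j p) + (\<Sum>j\<in>S. c j * D j q)"
    using assms by (simp add: Der_add distrib_left sum.distrib)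
  show "(\<Sum>j\<in>S. c j * D j (p * q)) = p * (\<Sum>j\<in>S. c j * D j q) + q * (\<Sum>j\<in>S. c j * D j p)"
    using assms by (simp add: Der_mult distrib_left sum.distrib sum_distrib_left algebra_simps)
next
  fix a p
  show "(\<Sum>j\<in>S. c j * D j (Const a * p)) = Const a * (\<Sum>j\<in>S. c j * D j p)"
    using assms by (simp add: Der_Const_mult sum_distrib_left mult.left_commute)
qed

lemma commD_in_Der:
  assumes "D \<in> Der" and "E \<in> Der"
  shows "commD D E \<in> Der"
  unfolding Der_def commD_def
proof (intro CollectI conjI allI)
  fix p q
  show "D (E (p + q)) - E (D (p + q)) = D (E p) - E (D p) + (D (E q) - E (D q))"
    using assms by (simp add: Der_add)
  show "D (E (p * q)) - E (D (p * q)) = p * (D (E q) - E (D q)) + q * (D (E p) - E (D p))"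
    using assms by (simp add: Der_add Der_mult algebra_simps)
next
  fix c p
  show "D (E (Const c * p)) - E (D (Const c * p)) = Const c * (D (E p) - E (D p))"
    using assms by (simp add: Der_Const_mult right_diff_distrib)
qed

lemma Der_eqI:
  assumes "D \<in> Der" and "E \<in> Der" and "\<And>i. D (Var i) = E (Var i)"
  shows "D = E"
proof
  fix p
  show "D p = E p"
    by (induction p rule: mpoly_induct) (use assms in \<open>simp_all add: Der_Const Der_add Der_mult\<close>)
qed

lemma linear_map_lincomb:
  fixes F :: "('a \<Rightarrow> 'b::comm_ring_1) \<Rightarrow> 'b"
  assumes linear: "\<And>A B f. F (\<lambda>p. A p + f * B p) = F A + f * F B" and zero: "F (\<lambda>_. 0) = 0"
    and "finite S"
  shows "F (\<lambda>p. \<Sum>j\<in>S. c j * D j p) = (\<Sum>j\<in>S. c j * F (D j))"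
  using \<open>finite S\<close>
proof (induction S rule: finite_induct)
  case empty
  show ?case using zero by simp
next
  case (insert j S)
  have "(\<lambda>p. \<Sum>i\<in>insert j S. c i * D i p) = (\<lambda>p. (\<Sum>i\<in>S. c i * D i p) + c j * D j p)"
    using insert by (simp add: add.commute)
  then have "F (\<lambda>p. \<Sum>i\<in>insert j S. c i * D i p) = F (\<lambda>p. \<Sum>i\<in>S. c i * D i p) + c j * F (D j)"
    by (simp only: linear)
  then show ?case
    using insert by (simp add: add.commute)
qed

lemma mpoly_double_eq_0:
  fixes p :: "('n, 'k::field_char_0) mpoly"
  assumes "p + p = 0"
  shows "p = 0"
proof (rule poly_mapping_eqI)
  fix m
  have "Poly_Mapping.lookup p m + Poly_Mapping.lookup p m = 0"
    using arg_cong[OF assms, of "\<lambda>q. Poly_Mapping.lookup q m"] by (simp only: lookup_add lookup_zero)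
  then have "2 * Poly_Mapping.lookup p m = 0"
    by (simp only: mult_2)
  then show "Poly_Mapping.lookup p m = Poly_Mapping.lookup 0 m" by simp
qed

lemma ideal_zero: "is_ideal I \<Longrightarrow> 0 \<in> I"
  by (simp add: is_ideal_def)

lemma ideal_add: "is_ideal I \<Longrightarrow> x \<in> I \<Longrightarrow> y \<in> I \<Longrightarrow> x + y \<in> I"
  by (simp add: is_ideal_def)

lemma ideal_mult_left: "is_ideal I \<Longrightarrow> x \<in> I \<Longrightarrow> p * x \<in> I"
  by (simp add: is_ideal_def)

lemma ideal_mult_right: "is_ideal I \<Longrightarrow> x \<in> I \<Longrightarrow> x * p \<in> I"
  using ideal_mult_left[of I x p] by (simp add: mult.commute)

lemma ideal_minus: "is_ideal I \<Longrightarrow> x \<in> I \<Longrightarrow> - x \<in> I"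
  using ideal_mult_left[of I x "- 1"] by simp

lemma ideal_diff: "is_ideal I \<Longrightarrow> x \<in> I \<Longrightarrow> y \<in> I \<Longrightarrow> x - y \<in> I"
  using ideal_add[of I x "- y"] ideal_minus[of I y] by simp

lemma ideal_sum: "is_ideal I \<Longrightarrow> (\<And>x. x \<in> S \<Longrightarrow> f x \<in> I) \<Longrightarrow> sum f S \<in> I"
  by (induction S rule: infinite_finite_induct) (auto simp: ideal_zero ideal_add)

lemma IDer_apply_in_ideal: "Z \<in> IDer I \<Longrightarrow> is_ideal I \<Longrightarrow> Z p \<in> I"
  by (induction rule: IDer.induct)
    (auto simp: ideal_zero addD_def scal_def intro!: ideal_add ideal_mult_right)

lemma cong_refl: "is_ideal I \<Longrightarrow> cong I a a"
  by (simp add: cong_def ideal_zero)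

lemma cong_trans: "is_ideal I \<Longrightarrow> cong I a b \<Longrightarrow> cong I b c \<Longrightarrow> cong I a c"
  unfolding cong_def using ideal_add[of I "a - b" "b - c"] by simp

lemma cong_add: "is_ideal I \<Longrightarrow> cong I a b \<Longrightarrow> cong I c d \<Longrightarrow> cong I (a + c) (b + d)"
  unfolding cong_def using ideal_add[of I "a - b" "c - d"] by (simp add: algebra_simps)

lemma cong_diff: "is_ideal I \<Longrightarrow> cong I a b \<Longrightarrow> cong I c d \<Longrightarrow> cong I (a - c) (b - d)"
  unfolding cong_def using ideal_diff[of I "a - b" "c - d"] by (simp add: algebra_simps)

lemma cong_mult_left: "is_ideal I \<Longrightarrow> cong I a b \<Longrightarrow> cong I (c * a) (c * b)"
  unfolding cong_def using ideal_mult_left[of I "a - b" c] by (simp add: algebra_simps)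

lemma DerI_apply_cong: "X \<in> DerI I \<Longrightarrow> cong I a b \<Longrightarrow> cong I (X a) (X b)"
  by (auto simp: cong_def DerI_def Der_diff[symmetric])

lemma commD_in_DerI: "is_ideal I \<Longrightarrow> X \<in> DerI I \<Longrightarrow> Y \<in> DerI I \<Longrightarrow> commD X Y \<in> DerI I"
  by (auto simp: DerI_def commD_def intro: commD_in_Der[unfolded commD_def] ideal_diff)

lemma lincomb_in_DerI:
  assumes "is_ideal I" and "\<And>j. j \<in> S \<Longrightarrow> D j \<in> DerI I"
  shows "(\<lambda>p. \<Sum>j\<in>S. c j * D j p) \<in> DerI I"
  using assms lincomb_in_Der[of S D c] by (auto simp: DerI_def intro!: ideal_sum ideal_mult_left)

locale symplectic_poisson =
  fixes pb :: "('n::finite, 'k::comm_ring_1) mpoly \<Rightarrow> ('n, 'k) mpoly \<Rightarrow> ('n, 'k) mpoly"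
    and Q :: "'n \<Rightarrow> 'n \<Rightarrow> ('n, 'k) mpoly"
  assumes poisson: "poisson_bracket pb"
    and inverse_right: "\<And>i j. (\<Sum>l\<in>UNIV. pb (Var i) (Var l) * Q l j) = (if i = j then 1 else 0)"
    and inverse_left: "\<And>i j. (\<Sum>l\<in>UNIV. Q i l * pb (Var l) (Var j)) = (if i = j then 1 else 0)"
begin

lemma pb_Der: "pb a \<in> Der"
  using poisson unfolding poisson_bracket_def by blast

lemma pb_antisym: "pb a b = - pb b a"
  using poisson unfolding poisson_bracket_def by blast

lemma pb_jacobi: "pb a (pb b c) + pb b (pb c a) + pb c (pb a b) = 0"
  using poisson unfolding poisson_bracket_def by blast

lemma pb_left_Der: "(\<lambda>a. pb a b) \<in> Der"
proof -
  have "(\<lambda>a. pb a b) = (\<lambda>a. - pb b a)"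
    by (rule ext) (rule pb_antisym)
  with Der_uminus[OF pb_Der] show ?thesis
    by (simp only:)
qed

lemma pb_zero_left: "pb 0 = (\<lambda>_. 0)"
proof
  fix p
  show "pb 0 p = 0"
    using pb_antisym[of 0 p] by (simp add: Der_zero[OF pb_Der])
qed

lemma commD_pb: "commD (pb b) (pb a) = pb (pb b a)"
proof
  fix p
  have "pb b (pb a p) + pb a (pb p b) + pb p (pb b a) = 0" by (rule pb_jacobi)
  then show "commD (pb b) (pb a) p = pb (pb b a) p"
    by (simp add: commD_def pb_antisym[of p b] pb_antisym[of p "pb b a"] Der_minus[OF pb_Der]
        algebra_simps)
qed

definition ham_coeff :: "(('n, 'k) mpoly \<Rightarrow> ('n, 'k) mpoly) \<Rightarrow> 'n \<Rightarrow> ('n, 'k) mpoly" where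
  "ham_coeff D j = (\<Sum>l\<in>UNIV. D (Var l) * Q l j)"

definition omega ::
    "(('n, 'k) mpoly \<Rightarrow> ('n, 'k) mpoly) \<Rightarrow> (('n, 'k) mpoly \<Rightarrow> ('n, 'k) mpoly) \<Rightarrow> ('n, 'k) mpoly" where
  "omega D X = (\<Sum>j\<in>UNIV. ham_coeff D j * X (Var j))"

lemma Der_eq_ham_sum:
  assumes "D \<in> Der"
  shows "D = (\<lambda>p. \<Sum>j\<in>UNIV. ham_coeff D j * pb (Var j) p)"
proof (rule Der_eqI[OF assms lincomb_in_Der[OF pb_Der]])
  fix i
  have "(\<Sum>j\<in>UNIV. ham_coeff D j * pb (Var j) (Var i))
      = (\<Sum>l\<in>UNIV. D (Var l) * (\<Sum>j\<in>UNIV. Q l j * pb (Var j) (Var i)))"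
    unfolding ham_coeff_def sum_distrib_left sum_distrib_right
    by (subst sum.swap) (simp add: mult.assoc)
  also have "\<dots> = D (Var i)"
    by (simp add: inverse_left if_distrib[of "\<lambda>x. _ * x"] cong: if_cong)
  finally show "D (Var i) = (\<Sum>j\<in>UNIV. ham_coeff D j * pb (Var j) (Var i))" ..
qed

lemma omega_ham_left:
  assumes "X \<in> Der"
  shows "omega (pb a) X = X a"
proof -
  define c where "c l = (\<Sum>j\<in>UNIV. Q l j * X (Var j))" for l
  \<comment> \<open>the right inverse of the tensor writes \<open>X\<close> as \<open>\<Sum>\<^sub>l c\<^sub>l {_, x\<^sub>l}\<close>\<close>
  have X_eq: "(\<lambda>a. \<Sum>l\<in>UNIV. c l * pb a (Var l)) = X"
  proof (rule Der_eqI[OF lincomb_in_Der[OF pb_left_Der] assms])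
    fix i
    have "(\<Sum>l\<in>UNIV. c l * pb (Var i) (Var l))
        = (\<Sum>j\<in>UNIV. (\<Sum>l\<in>UNIV. pb (Var i) (Var l) * Q l j) * X (Var j))"
      unfolding c_def sum_distrib_left sum_distrib_right
      by (subst sum.swap) (simp add: mult_ac)
    also have "\<dots> = X (Var i)"
      by (simp add: inverse_right if_distrib[of "\<lambda>x. x * _"] cong: if_cong)
    finally show "(\<Sum>l\<in>UNIV. c l * pb (Var i) (Var l)) = X (Var i)" .
  qed
  have "omega (pb a) X = (\<Sum>l\<in>UNIV. c l * pb a (Var l))"
    unfolding omega_def ham_coeff_def c_def sum_distrib_left sum_distrib_right
    by (subst sum.swap) (simp add: mult_ac)
  also have "\<dots> = X a"
    using fun_cong[OF X_eq, of a] by simp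
  finally show ?thesis .
qed

lemma omega_ham_right:
  assumes "D \<in> Der"
  shows "omega D (pb b) = - D b"
  by (subst (2) Der_eq_ham_sum[OF assms])
    (simp add: omega_def pb_antisym[of b] sum_negf)

lemma omega_lincomb_right: "omega D (\<lambda>p. \<Sum>k\<in>S. c k * E k p) = (\<Sum>k\<in>S. c k * omega D (E k))"
  unfolding omega_def sum_distrib_left by (subst sum.swap) (simp add: mult_ac)

lemma omega_antisym:
  assumes "D \<in> Der" and "X \<in> Der"
  shows "omega D X = - omega X D"
proof -
  have "omega D X = omega D (\<lambda>p. \<Sum>k\<in>UNIV. ham_coeff X k * pb (Var k) p)"
    by (subst Der_eq_ham_sum[OF assms(2)]) (rule refl)
  also have "\<dots> = (\<Sum>k\<in>UNIV. ham_coeff X k * - D (Var k))"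
    by (simp add: omega_lincomb_right omega_ham_right[OF assms(1)])
  also have "\<dots> = - omega X D"
    by (simp add: omega_def sum_negf mult.commute)
  finally show ?thesis .
qed

lemma omega_linear_left:
  shows "omega (\<lambda>p. A p + B p) X = omega A X + omega B X"
    and "omega (\<lambda>p. A p - B p) X = omega A X - omega B X"
    and "omega (\<lambda>p. - A p) X = - omega A X"
    and "omega (\<lambda>p. f * A p) X = f * omega A X"
    and "omega (\<lambda>_. 0) X = 0"
  by (simp_all add: omega_def ham_coeff_def sum.distrib sum_subtractf sum_negf
      sum_distrib_left sum_distrib_right algebra_simps)

lemma omega_linear_right:
  shows "omega D (\<lambda>p. A p + B p) = omega D A + omega D B"
    and "omega D (\<lambda>p. A p - B p) = omega D A - omega D B"
    and "omega D (\<lambda>p. f * A p) = f * omega D A"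
    and "omega D (\<lambda>_. 0) = 0"
  by (simp_all add: omega_def sum.distrib sum_subtractf sum_distrib_left algebra_simps)

lemma omega_in_ideal_left: "is_ideal I \<Longrightarrow> (\<And>p. Z p \<in> I) \<Longrightarrow> omega Z X \<in> I"
  by (auto simp: omega_def ham_coeff_def intro!: ideal_sum ideal_mult_right)

lemma omega_in_ideal_right: "is_ideal I \<Longrightarrow> (\<And>p. Z p \<in> I) \<Longrightarrow> omega D Z \<in> I"
  by (auto simp: omega_def intro!: ideal_sum ideal_mult_left)

lemma commD_lincomb_left:
  assumes "X \<in> Der"
  shows "commD (\<lambda>p. A p + f * B p) X = (\<lambda>p. commD A X p + f * commD B X p - X f * B p)"
  by (simp add: fun_eq_iff commD_def Der_add[OF assms] Der_mult[OF assms] algebra_simps)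

lemma dR2_omega_lincomb_left:
  assumes "X1 \<in> Der" and "X2 \<in> Der"
  shows "dR2 omega (\<lambda>p. A p + f * B p) X1 X2 = dR2 omega A X1 X2 + f * dR2 omega B X1 X2"
  using assms
  by (simp add: dR2_def commD_lincomb_left omega_linear_left omega_linear_right
      Der_add Der_diff Der_mult) (simp add: algebra_simps)

lemma dR2_omega_zero_left:
  assumes "X1 \<in> Der" and "X2 \<in> Der"
  shows "dR2 omega (\<lambda>_. 0) X1 X2 = 0"
proof -
  have "commD (\<lambda>_. 0) X1 = (\<lambda>_. 0)" and "commD (\<lambda>_. 0) X2 = (\<lambda>_. 0)"
    using assms by (simp_all add: commD_def Der_zero fun_eq_iff)
  then show ?thesis
    using assms by (simp add: dR2_def omega_linear_left omega_linear_right Der_zero)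
qed

lemma dR2_omega_swap:
  assumes "X0 \<in> Der" and "X1 \<in> Der" and "X2 \<in> Der"
  shows "dR2 omega X0 X1 X2 = - dR2 omega X1 X0 X2"
proof -
  have "commD X1 X0 = (\<lambda>p. - commD X0 X1 p)"
    by (simp add: commD_def fun_eq_iff)
  then show ?thesis
    by (simp add: dR2_def omega_linear_left omega_antisym[OF assms(2,1)] Der_minus[OF assms(3)])
qed

lemma dR2_omega_ham:
  assumes "X \<in> Der"
  shows "dR2 omega (pb b) (pb a) X = 0"
  using assms
  by (simp add: dR2_def commD_pb omega_ham_left omega_ham_right pb_Der commD_in_Der)
    (simp add: commD_def pb_antisym[of a b] Der_minus)

lemma dR2_omega_eq_0:
  assumes "X0 \<in> Der" and "X1 \<in> Der" and "X2 \<in> Der"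
  shows "dR2 omega X0 X1 X2 = 0"
proof -
  have expand_first: "dR2 omega Y Z X2 = (\<Sum>j\<in>UNIV. ham_coeff Y j * dR2 omega (pb (Var j)) Z X2)"
    if "Y \<in> Der" and "Z \<in> Der" for Y Z
    by (subst Der_eq_ham_sum[OF \<open>Y \<in> Der\<close>])
      (rule linear_map_lincomb; simp add: dR2_omega_lincomb_left dR2_omega_zero_left that assms)
  have ham_first: "dR2 omega (pb a) Y X2 = 0" if "Y \<in> Der" for a Y
    using dR2_omega_swap[OF pb_Der that assms(3)]
    by (simp add: expand_first[OF that pb_Der] dR2_omega_ham[OF assms(3)])
  show ?thesis
    by (simp add: expand_first[OF assms(1,2)] ham_first[OF assms(2)])
qed

lemma pb_in_ideal: "poisson_ideal pb I \<Longrightarrow> p \<in> I \<Longrightarrow> pb a p \<in> I"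
  by (auto simp: poisson_ideal_def pb_antisym[of a] intro: ideal_minus)

lemma pb_in_DerI: "poisson_ideal pb I \<Longrightarrow> pb a \<in> DerI I"
  by (simp add: DerI_def pb_Der pb_in_ideal)

lemma ham_sum_in_HamComb: "finite S \<Longrightarrow> (\<lambda>p. \<Sum>j\<in>S. c j * pb (Var j) p) \<in> HamComb pb"
proof (induction S rule: finite_induct)
  case empty
  show ?case using HamComb.zero by simp
next
  case (insert j S)
  have "(\<lambda>p. \<Sum>j\<in>insert j S. c j * pb (Var j) p)
      = addD (\<lambda>p. \<Sum>j\<in>S. c j * pb (Var j) p) (scal (c j) (pb (Var j)))"
    using insert by (auto simp: addD_def scal_def add.commute)
  then show ?case using HamComb.step[OF insert.IH] by simp
qed

lemma Sharp_eq_DerI: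
  assumes "poisson_ideal pb I"
  shows "Sharp pb I = DerI I"
proof (intro equalityI subsetI)
  fix D
  assume D: "D \<in> DerI I"
  then have "D = (\<lambda>p. \<Sum>j\<in>UNIV. ham_coeff D j * pb (Var j) p)"
    by (simp add: DerI_def Der_eq_ham_sum[symmetric])
  also have "\<dots> \<in> HamComb pb"
    by (simp add: ham_sum_in_HamComb)
  finally have "D \<in> HamComb pb" .
  moreover have "congD I D D"
    using IDer.zero by (simp add: congD_def subD_def)
  ultimately show "D \<in> Sharp pb I"
    using D by (auto simp: Sharp_def)
qed (simp add: Sharp_def)

lemma omegaHam_omega:
  assumes "poisson_ideal pb I"
  shows "omegaHam pb I omega"
  unfolding omegaHam_def
proof (intro conjI ballI allI impI)
  have ideal: "is_ideal I" using assms by (simp add: poisson_ideal_def)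
  fix D D' X X'
  assume "congD I D D'" and "congD I X X'"
  then have "\<And>p. D p - D' p \<in> I" and "\<And>p. X p - X' p \<in> I"
    using IDer_apply_in_ideal ideal by (auto simp: congD_def subD_def)
  then have "omega (\<lambda>p. D p - D' p) X + omega D' (\<lambda>p. X p - X' p) \<in> I"
    by (intro ideal_add[OF ideal] omega_in_ideal_left[OF ideal] omega_in_ideal_right[OF ideal])
  then show "cong I (omega D X) (omega D' X')"
    by (simp add: cong_def omega_linear_left omega_linear_right)
next
  have ideal: "is_ideal I" using assms by (simp add: poisson_ideal_def)
  {
    fix D E X c
    show "cong I (omega (addD D (scal c E)) X) (omega D X + c * omega E X)"
      using ideal by (simp add: addD_def scal_def omega_linear_left cong_refl)
  next
    fix D X Y c
    show "cong I (omega D (addD X (scal c Y))) (omega D X + c * omega D Y)"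
      using ideal by (simp add: addD_def scal_def omega_linear_right cong_refl)
  next
    fix a X
    assume "X \<in> DerI I"
    then show "cong I (omega (pb a) X) (X a)"
      using ideal by (simp add: DerI_def omega_ham_left cong_refl)
  }
qed

lemma omegaHam_cong_omega:
  assumes w: "omegaHam pb I w" and PI: "poisson_ideal pb I"
    and D: "D \<in> DerI I" and X: "X \<in> DerI I"
  shows "cong I (w D X) (omega D X)"
proof -
  have ideal: "is_ideal I" using PI by (simp add: poisson_ideal_def)
  have linear: "\<And>D E c. D \<in> DerI I \<Longrightarrow> E \<in> DerI I \<Longrightarrow>
      cong I (w (addD D (scal c E)) X) (w D X + c * w E X)"
    and ham: "\<And>a. cong I (w (pb a) X) (X a)"
    using w X unfolding omegaHam_def Sharp_eq_DerI[OF PI] by blast+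
  let ?H = "\<lambda>S p. \<Sum>j\<in>S. ham_coeff D j * pb (Var j) p"
  have H_DerI: "?H S \<in> DerI I" for S
    by (rule lincomb_in_DerI[OF ideal pb_in_DerI[OF PI]])
  have partial_sums: "cong I (w (?H S) X) (\<Sum>j\<in>S. ham_coeff D j * X (Var j))" if "finite S" for S
    using that
  proof (induction S rule: finite_induct)
    case empty
    have "X 0 = 0"
      using X by (simp add: DerI_def Der_zero)
    then show ?case using ham[of 0] by (simp add: pb_zero_left)
  next
    case (insert j S)
    have "?H (insert j S) = addD (?H S) (scal (ham_coeff D j) (pb (Var j)))"
      using insert by (simp add: fun_eq_iff addD_def scal_def add.commute)
    then have "cong I (w (?H (insert j S)) X) (w (?H S) X + ham_coeff D j * w (pb (Var j)) X)"
      using linear[OF H_DerI pb_in_DerI[OF PI]] by simp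
    moreover have "cong I (w (?H S) X + ham_coeff D j * w (pb (Var j)) X)
        ((\<Sum>j\<in>S. ham_coeff D j * X (Var j)) + ham_coeff D j * X (Var j))"
      by (rule cong_add[OF ideal insert.IH cong_mult_left[OF ideal ham]])
    ultimately show ?case
      using insert cong_trans[OF ideal] by (simp add: add.commute)
  qed
  have "?H UNIV = D"
    using D by (simp add: DerI_def Der_eq_ham_sum[symmetric])
  then show ?thesis
    using partial_sums[OF finite_UNIV] by (simp add: omega_def)
qed

lemma omegaHam_dR2_cong_0:
  assumes w: "omegaHam pb I w" and PI: "poisson_ideal pb I"
    and X0: "X0 \<in> DerI I" and X1: "X1 \<in> DerI I" and X2: "X2 \<in> DerI I"
  shows "cong I (dR2 w X0 X1 X2) 0"
proof -
  have ideal: "is_ideal I" using PI by (simp add: poisson_ideal_def)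
  note w_omega = omegaHam_cong_omega[OF w PI]
  note commD = commD_in_DerI[OF ideal]
  have "cong I (dR2 w X0 X1 X2) (dR2 omega X0 X1 X2)"
    unfolding dR2_def
  proof (intro cong_diff[OF ideal] cong_add[OF ideal])
    show "cong I (X0 (w X1 X2)) (X0 (omega X1 X2))"
      by (rule DerI_apply_cong[OF X0 w_omega[OF X1 X2]])
    show "cong I (X1 (w X0 X2)) (X1 (omega X0 X2))"
      by (rule DerI_apply_cong[OF X1 w_omega[OF X0 X2]])
    show "cong I (X2 (w X0 X1)) (X2 (omega X0 X1))"
      by (rule DerI_apply_cong[OF X2 w_omega[OF X0 X1]])
    show "cong I (w (commD X0 X1) X2) (omega (commD X0 X1) X2)"
      by (rule w_omega[OF commD[OF X0 X1] X2])
    show "cong I (w (commD X0 X2) X1) (omega (commD X0 X2) X1)"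
      by (rule w_omega[OF commD[OF X0 X2] X1])
    show "cong I (w (commD X1 X2) X0) (omega (commD X1 X2) X0)"
      by (rule w_omega[OF commD[OF X1 X2] X0])
  qed
  moreover have "dR2 omega X0 X1 X2 = 0"
    using X0 X1 X2 by (intro dR2_omega_eq_0) (simp_all add: DerI_def)
  ultimately show ?thesis by simp
qed

end

locale symplectic_poisson_char_0 = symplectic_poisson pb Q
  for pb :: "('n::finite, 'k::field_char_0) mpoly \<Rightarrow> ('n, 'k) mpoly \<Rightarrow> ('n, 'k) mpoly"
    and Q :: "'n \<Rightarrow> 'n \<Rightarrow> ('n, 'k) mpoly"
begin

lemma omega_self: "D \<in> Der \<Longrightarrow> omega D D = 0"
  using omega_antisym[of D D] by (simp add: mpoly_double_eq_0 eq_neg_iff_add_eq_0)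

lemma omegaHam_alternating:
  assumes "omegaHam pb I w" and "poisson_ideal pb I" and "D \<in> DerI I"
  shows "cong I (w D D) 0"
  using omegaHam_cong_omega[OF assms(1,2,3,3)] assms(3) by (simp add: DerI_def omega_self)

end

theorem mainTheorem2:
  fixes pb :: "('n::finite, 'k::field_char_0) mpoly \<Rightarrow> ('n, 'k) mpoly \<Rightarrow> ('n, 'k) mpoly"
    and I :: "('n, 'k) mpoly set"
  assumes "poisson_bracket pb"
    and "symplectic pb"
    and "poisson_ideal pb I"
  shows "(\<exists>w. omegaHam pb I w)
    \<and> (\<forall>w. omegaHam pb I w \<longrightarrow>
          (\<forall>D\<in>Sharp pb I. cong I (w D D) 0) \<and>
          (\<forall>X0\<in>Sharp pb I. \<forall>X1\<in>Sharp pb I. \<forall>X2\<in>Sharp pb I.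
              cong I (dR2 w X0 X1 X2) 0))"
proof -
  obtain Q where "\<forall>i j. (\<Sum>l\<in>UNIV. pb (Var i) (Var l) * Q l j) = (if i = j then 1 else 0)"
    and "\<forall>i j. (\<Sum>l\<in>UNIV. Q i l * pb (Var l) (Var j)) = (if i = j then 1 else 0)"
    using assms(2) unfolding symplectic_def by blast
  then interpret symplectic_poisson_char_0 pb Q
    using assms(1) by unfold_locales auto
  show ?thesis
    unfolding Sharp_eq_DerI[OF assms(3)]
    using omegaHam_omega[OF assms(3)] omegaHam_alternating[OF _ assms(3)]
      omegaHam_dR2_cong_0[OF _ assms(3)]
    by blast
qed

end
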